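(* For every integer $n\ge0$, the Zernike polynomials $Z^{n,0},\dots,Z^{n,n}$ satisfy the first-order system $$\frac{\partial Z^{n,n}}{\partial z}=0,\qquad \frac{\partial Z^{n,k}}{\partial \bar z}+\frac{\partial Z^{n,k-1}}{\partial z}=0\ \ (k=1,\dots,n),\qquad \frac{\partial Z^{n,0}}{\partial \bar z}=0,$$ and the boundary conditions $Z^{n,k}(t,\bar t)=(-1)^k t^{\,n-2k}$ for all $|t|=1$ and $k=0,1,\dots,n$.
   Context: Identify $\mathbb R^2$ with $\mathbb C$ via $z=x^1+ix^2$, $\bar z=x^1-ix^2$, and use $\frac{\partial}{\partial z}=\frac12\big(\frac{\partial}{\partial x^1}-i\frac{\partial}{\partial x^2}\big)$, $\frac{\partial}{\partial \bar z}=\frac12\big(\frac{\partial}{\partial x^1}+i\frac{\partial}{\partial x^2}\big)$. Zernike polynomials (in the paper's numbering) are defined for integers $n\ge 0$, $0\le k\le n$ by $$Z^{n,k}(z,\bar z)=\sum_{s=0}^{k}\binom{k}{s}\binom{n-k}{s}z^{n-k-s}(1-z\bar z)^s(-\bar z)^{k-s}\quad\text{for }0\le k\le [n/2],$$ and $Z^{n,k}=(-1)^n\,\overline{Z^{n,n-k}}$ for $[n/2]<k\le n$, where $[\cdot]$ is the integer part. *)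

theory Defs
  imports "HOL-Analysis.Analysis"
begin

definition dx1 :: "(complex \<Rightarrow> complex) \<Rightarrow> complex \<Rightarrow> complex" where
  "dx1 f z = vector_derivative (\<lambda>t::real. f (z + complex_of_real t)) (at 0)"

definition dx2 :: "(complex \<Rightarrow> complex) \<Rightarrow> complex \<Rightarrow> complex" where
  "dx2 f z = vector_derivative (\<lambda>t::real. f (z + \<i> * complex_of_real t)) (at 0)"

definition dz :: "(complex \<Rightarrow> complex) \<Rightarrow> complex \<Rightarrow> complex" where
  "dz f z = (dx1 f z - \<i> * dx2 f z) / 2"

definition dzbar :: "(complex \<Rightarrow> complex) \<Rightarrow> complex \<Rightarrow> complex" where
  "dzbar f z = (dx1 f z + \<i> * dx2 f z) / 2"

text \<open>Zernike polynomial Z^{n,k}(z, zbar) for 0 <= k <= [n/2], with zbar = cnj z.\<close>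
definition zernike_low :: "nat \<Rightarrow> nat \<Rightarrow> complex \<Rightarrow> complex" where
  "zernike_low n k z = (\<Sum>s=0..k. of_nat (k choose s) * of_nat ((n - k) choose s)
       * z ^ (n - k - s) * (1 - z * cnj z) ^ s * (- cnj z) ^ (k - s))"

definition zernike :: "nat \<Rightarrow> nat \<Rightarrow> complex \<Rightarrow> complex" where
  "zernike n k z = (if k \<le> n div 2 then zernike_low n k z
                    else (-1) ^ n * cnj (zernike_low n (n - k) z))"

end

(*
  Expanding (1 - z zbar)^s in the defining sum shows that, for every k <= n, Z^{n,k} is the
  polynomial sum_r (-1)^(k+r) C(k,r) C(n-r,k) z^(n-k-r) zbar^(k-r) in z and zbar.  Its
  coefficients are invariant under k -> n-k, so the same formula also covers the half of the
  numbering defined by conjugation.  The Wirtinger derivatives act on z^p zbar^q as formal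
  partial derivatives, and the first-order system then holds term by term because of the
  absorption identity (k+1-r) C(k+1,r) C(n-r,k+1) = (n-k-r) C(k,r) C(n-r,k).  On |t| = 1 the
  factor 1 - t tbar vanishes, so only the s = 0 term of the defining sum survives.
*)
theory Submission
  imports Defs
begin

lemma has_derivative_imp_directional_derivative:
  fixes f :: "'a::real_normed_vector \<Rightarrow> 'b::real_normed_vector"
  assumes "(f has_derivative L) (at z)"
  shows "vector_derivative (\<lambda>t::real. f (z + t *\<^sub>R v)) (at 0) = L v"
proof -
  have "((\<lambda>t::real. z + t *\<^sub>R v) has_derivative (\<lambda>t. t *\<^sub>R v)) (at 0)"
    by (auto intro!: derivative_eq_intros)
  moreover have "(f has_derivative L) (at (z + 0 *\<^sub>R v))"
    using assms by simp
  ultimately have "((\<lambda>t. f (z + t *\<^sub>R v)) has_derivative (\<lambda>t. L (t *\<^sub>R v))) (at 0)"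
    by (rule has_derivative_compose)
  then show ?thesis
    by (simp add: linear.scaleR[OF has_derivative_linear[OF assms]] has_vector_derivative_def
        vector_derivative_at)
qed

lemma dx1_eq_derivative:
  assumes "(f has_derivative L) (at z)"
  shows "dx1 f z = L 1"
  using has_derivative_imp_directional_derivative[OF assms, of 1]
  by (simp add: dx1_def scaleR_conv_of_real)

lemma dx2_eq_derivative:
  assumes "(f has_derivative L) (at z)"
  shows "dx2 f z = L \<i>"
  using has_derivative_imp_directional_derivative[OF assms, of \<i>]
  by (simp add: dx2_def scaleR_conv_of_real mult.commute)

lemma
  assumes "(f has_derivative (\<lambda>h. a * h + b * cnj h)) (at z)"
  shows dz_eq_derivative: "dz f z = a" and dzbar_eq_derivative: "dzbar f z = b"
  unfolding dz_def dzbar_def dx1_eq_derivative[OF assms] dx2_eq_derivative[OF assms]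
  by (simp_all add: algebra_simps)

lemma has_derivative_sum_monomials_cnj:
  fixes c :: "'i \<Rightarrow> complex" and p q :: "'i \<Rightarrow> nat"
  shows "((\<lambda>z. \<Sum>i\<in>I. c i * z ^ p i * cnj z ^ q i) has_derivative
          (\<lambda>h. (\<Sum>i\<in>I. c i * of_nat (p i) * z ^ (p i - 1) * cnj z ^ q i) * h
             + (\<Sum>i\<in>I. c i * of_nat (q i) * z ^ p i * cnj z ^ (q i - 1)) * cnj h)) (at z)"
  by (auto intro!: derivative_eq_intros
        bounded_linear.has_derivative[OF bounded_linear_cnj]
      simp: sum.distrib sum_distrib_left algebra_simps)

lemma Suc_times_choose_Suc: "Suc k * (n choose Suc k) = (n - k) * (n choose k)"
  by (simp only: binomial_absorption binomial_absorb_comp)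

lemma choose_mult_choose_Suc:
  "(Suc k choose r) * ((n - r) choose Suc k) * (Suc k - r)
     = (k choose r) * ((n - r) choose k) * (n - k - r)"
proof -
  have "(Suc k - r) * (Suc k choose r) = Suc k * (k choose r)"
    using binomial_absorb_comp[of "Suc k" r] by simp
  moreover have "Suc k * ((n - r) choose Suc k) = (n - k - r) * ((n - r) choose k)"
    using Suc_times_choose_Suc[of k "n - r"] by (simp only: diff_commute)
  ultimately show ?thesis
    by (metis mult.assoc mult.commute)
qed

lemma choose_mult_choose_complement:
  assumes "k \<le> n"
  shows "((n - k) choose r) * ((n - r) choose (n - k)) = (k choose r) * ((n - r) choose k)"
proof (cases "r \<le> k \<and> r \<le> n - k")
  case True
  then have "k \<le> n - r" "n - k \<le> n - r" "k - r \<le> n - r - r" "n - r - r - (k - r) = n - k - r"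
    using assms by linarith+
  have "((n - k) choose r) * ((n - r) choose (n - k))
      = ((n - r) choose r) * ((n - r - r) choose (n - k - r))"
    using True choose_mult[of r "n - k" "n - r"] \<open>n - k \<le> n - r\<close> by (simp add: mult.commute)
  also have "\<dots> = ((n - r) choose r) * ((n - r - r) choose (k - r))"
    using binomial_symmetric[OF \<open>k - r \<le> n - r - r\<close>] \<open>n - r - r - (k - r) = n - k - r\<close>
    by simp
  also have "\<dots> = (k choose r) * ((n - r) choose k)"
    using True choose_mult[of r k "n - r"] \<open>k \<le> n - r\<close> by (simp add: mult.commute)
  finally show ?thesis .
next
  case False
  then have "n - k < r \<or> n - r < n - k" "k < r \<or> n - r < k"
    using assms by linarith+
  then show ?thesis
    by (metis binomial_eq_0 mult_zero_left mult_zero_right)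
qed

lemma vandermonde_shifted: "(\<Sum>i\<le>k. (k choose i) * (m choose (i + r))) = (k + m) choose (k + r)"
proof -
  have "(k + m) choose (k + r) = (\<Sum>j\<le>k + r. (k choose j) * (m choose (k + r - j)))"
    by (rule vandermonde[symmetric])
  also have "\<dots> = (\<Sum>j\<le>k. (k choose j) * (m choose (k + r - j)))"
    by (rule sum.mono_neutral_right) auto
  also have "\<dots> = (\<Sum>i\<le>k. (k choose (k - i)) * (m choose (k + r - (k - i))))"
    by (rule sum.reindex_bij_witness[of _ "\<lambda>i. k - i" "\<lambda>i. k - i"]) auto
  also have "\<dots> = (\<Sum>i\<le>k. (k choose i) * (m choose (i + r)))"
    by (intro sum.cong refl) (auto simp: add.commute simp flip: binomial_symmetric)
  finally show ?thesis ..
qed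

lemma sum_choose_mult_choose_mult_choose:
  assumes "r \<le> k"
  shows "(\<Sum>s\<le>k. (k choose s) * (m choose s) * (s choose r))
    = (k choose r) * ((m + k - r) choose k)"
proof -
  have "(\<Sum>s\<le>k. (k choose s) * (m choose s) * (s choose r))
      = (\<Sum>s\<in>{r..k}. (k choose s) * (m choose s) * (s choose r))"
    by (rule sum.mono_neutral_right) auto
  also have "\<dots> = (\<Sum>s\<in>{r..k}. (k choose r) * ((k - r) choose (s - r)) * (m choose s))"
  proof (rule sum.cong)
    fix s
    assume "s \<in> {r..k}"
    then have "(k choose s) * (s choose r) = (k choose r) * ((k - r) choose (s - r))"
      by (simp add: choose_mult)
    then show "(k choose s) * (m choose s) * (s choose r)
        = (k choose r) * ((k - r) choose (s - r)) * (m choose s)"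
      by (metis mult.assoc mult.commute)
  qed simp
  also have "\<dots> = (k choose r) * (\<Sum>i\<le>k - r. ((k - r) choose i) * (m choose (i + r)))"
    unfolding sum_distrib_left
    by (rule sum.reindex_bij_witness[of _ "\<lambda>i. i + r" "\<lambda>s. s - r"])
      (use assms in \<open>auto simp: mult.assoc\<close>)
  also have "\<dots> = (k choose r) * ((m + k - r) choose k)"
    using assms by (simp add: vandermonde_shifted add.commute)
  finally show ?thesis .
qed

text \<open>
  The coefficient C(k,r) C(n-r,k) equals (n-r)! / (r! (k-r)! (n-k-r)!) and vanishes unless
  r <= min k (n-k), so the truncated exponents in the sums below never carry weight.
\<close>
definition zernike_coeff :: "nat \<Rightarrow> nat \<Rightarrow> nat \<Rightarrow> complex" where
  "zernike_coeff n k r = (-1) ^ (k + r) * of_nat ((k choose r) * ((n - r) choose k))"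

definition zernike_poly :: "nat \<Rightarrow> nat \<Rightarrow> complex \<Rightarrow> complex \<Rightarrow> complex" where
  "zernike_poly n k z w = (\<Sum>r\<le>n. zernike_coeff n k r * z ^ (n - k - r) * w ^ (k - r))"

definition zernike_poly_dz :: "nat \<Rightarrow> nat \<Rightarrow> complex \<Rightarrow> complex \<Rightarrow> complex" where
  "zernike_poly_dz n k z w =
     (\<Sum>r\<le>n. zernike_coeff n k r * of_nat (n - k - r) * z ^ (n - k - r - 1) * w ^ (k - r))"

definition zernike_poly_dw :: "nat \<Rightarrow> nat \<Rightarrow> complex \<Rightarrow> complex \<Rightarrow> complex" where
  "zernike_poly_dw n k z w =
     (\<Sum>r\<le>n. zernike_coeff n k r * of_nat (k - r) * z ^ (n - k - r) * w ^ (k - r - 1))"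

lemma has_derivative_zernike_poly:
  "((\<lambda>z. zernike_poly n k z (cnj z)) has_derivative
     (\<lambda>h. zernike_poly_dz n k z (cnj z) * h + zernike_poly_dw n k z (cnj z) * cnj h)) (at z)"
  unfolding zernike_poly_def zernike_poly_dz_def zernike_poly_dw_def
  by (rule has_derivative_sum_monomials_cnj)

lemma zernike_poly_dz_diag: "zernike_poly_dz n n z w = 0"
  by (simp add: zernike_poly_dz_def)

lemma zernike_poly_dw_0: "zernike_poly_dw n 0 z w = 0"
  by (simp add: zernike_poly_dw_def)

lemma zernike_coeff_Suc:
  "zernike_coeff n (Suc k) r * of_nat (Suc k - r) = - (zernike_coeff n k r * of_nat (n - k - r))"
proof -
  have "of_nat ((Suc k choose r) * ((n - r) choose Suc k) * (Suc k - r))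
      = (of_nat ((k choose r) * ((n - r) choose k) * (n - k - r)) :: complex)"
    by (simp only: choose_mult_choose_Suc)
  then show ?thesis
    unfolding zernike_coeff_def of_nat_mult by (simp add: mult.assoc)
qed

lemma zernike_poly_dw_Suc_add_dz: "zernike_poly_dw n (Suc k) z w + zernike_poly_dz n k z w = 0"
proof -
  have "zernike_coeff n (Suc k) r * of_nat (Suc k - r) * z ^ (n - Suc k - r) * w ^ (Suc k - r - 1)
      + zernike_coeff n k r * of_nat (n - k - r) * z ^ (n - k - r - 1) * w ^ (k - r) = 0" for r
  proof -
    have "n - Suc k - r = n - k - r - 1" "Suc k - r - 1 = k - r"
      by auto
    then have "zernike_coeff n (Suc k) r * of_nat (Suc k - r) * z ^ (n - Suc k - r) * w ^ (Suc k - r - 1)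
      + zernike_coeff n k r * of_nat (n - k - r) * z ^ (n - k - r - 1) * w ^ (k - r)
      = (zernike_coeff n (Suc k) r * of_nat (Suc k - r) + zernike_coeff n k r * of_nat (n - k - r))
        * (z ^ (n - k - r - 1) * w ^ (k - r))"
      by (simp only: distrib_right mult.assoc)
    then show ?thesis
      by (simp add: zernike_coeff_Suc)
  qed
  then show ?thesis
    unfolding zernike_poly_dw_def zernike_poly_dz_def sum.distrib[symmetric]
    by (intro sum.neutral) simp
qed

lemma zernike_poly_swap:
  assumes "k \<le> n"
  shows "zernike_poly n (n - k) w z = (-1) ^ n * zernike_poly n k z w"
proof -
  have "zernike_coeff n (n - k) r = (-1) ^ n * zernike_coeff n k r" for r
  proof -
    have "(-1::complex) ^ (n - k + r) = (-1) ^ n * (-1) ^ (k + r)"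
      using assms by (simp add: minus_one_power_iff)
    then show ?thesis
      using choose_mult_choose_complement[OF assms, of r] by (simp add: zernike_coeff_def)
  qed
  moreover have "n - (n - k) - r = k - r" for r
    using assms by auto
  ultimately show ?thesis
    unfolding zernike_poly_def sum_distrib_left
    by (intro sum.cong) (simp_all add: ac_simps)
qed

lemma cnj_zernike_poly: "cnj (zernike_poly n k z w) = zernike_poly n k (cnj z) (cnj w)"
  by (simp add: zernike_poly_def zernike_coeff_def)

lemma binomial_expansion_zernike_summand:
  fixes z w :: "'a::comm_ring_1"
  assumes "s \<le> k"
  shows "of_nat (k choose s) * of_nat (m choose s) * z ^ (m - s) * (1 - z * w) ^ s * (- w) ^ (k - s)
       = (\<Sum>r\<le>k. (-1) ^ (k + r) * of_nat ((k choose s) * (m choose s) * (s choose r))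
                  * z ^ (m - r) * w ^ (k - r))"
proof (cases "s \<le> m")
  case True
  have monomial: "z ^ (m - s) * (- (z * w)) ^ (s - r) * (- w) ^ (k - s)
      = (-1) ^ (k + r) * z ^ (m - r) * w ^ (k - r)"
    if "r \<le> s" for r
  proof -
    have "z ^ (m - s) * (- (z * w)) ^ (s - r) * (- w) ^ (k - s)
        = (-1) ^ ((s - r) + (k - s)) * z ^ ((m - s) + (s - r)) * w ^ ((s - r) + (k - s))"
      unfolding power_minus[of "z * w"] power_minus[of w] power_mult_distrib power_add
      by (simp only: ac_simps)
    also have "\<dots> = (-1) ^ (k - r) * z ^ (m - r) * w ^ (k - r)"
      using that True assms by (simp add: add.commute)
    finally show ?thesis
      using that assms by (simp add: neg_one_power_add_eq_neg_one_power_diff)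
  qed
  have "(1 - z * w) ^ s = (\<Sum>r\<le>s. of_nat (s choose r) * (- (z * w)) ^ (s - r))"
    using binomial_ring[of 1 "- (z * w)" s] by simp
  then have "of_nat (k choose s) * of_nat (m choose s) * z ^ (m - s) * (1 - z * w) ^ s * (- w) ^ (k - s)
      = (\<Sum>r\<le>s. of_nat ((k choose s) * (m choose s) * (s choose r))
                  * (z ^ (m - s) * (- (z * w)) ^ (s - r) * (- w) ^ (k - s)))"
    by (simp add: sum_distrib_left sum_distrib_right ac_simps)
  also have "\<dots> = (\<Sum>r\<le>s. (-1) ^ (k + r) * of_nat ((k choose s) * (m choose s) * (s choose r))
                  * z ^ (m - r) * w ^ (k - r))"
  proof (rule sum.cong)
    fix r
    assume "r \<in> {..s}"
    then have "r \<le> s"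
      by simp
    then show "of_nat ((k choose s) * (m choose s) * (s choose r))
          * (z ^ (m - s) * (- (z * w)) ^ (s - r) * (- w) ^ (k - s))
        = (-1) ^ (k + r) * of_nat ((k choose s) * (m choose s) * (s choose r))
          * z ^ (m - r) * w ^ (k - r)"
      unfolding monomial[OF \<open>r \<le> s\<close>] by (simp add: ac_simps)
  qed simp
  also have "\<dots> = (\<Sum>r\<le>k. (-1) ^ (k + r) * of_nat ((k choose s) * (m choose s) * (s choose r))
                  * z ^ (m - r) * w ^ (k - r))"
    using assms by (intro sum.mono_neutral_left) (auto simp: binomial_eq_0)
  finally show ?thesis .
next
  case False
  then show ?thesis
    by (simp add: binomial_eq_0)
qed

lemma zernike_low_eq_zernike_poly:
  assumes "k \<le> n"
  shows "zernike_low n k z = zernike_poly n k z (cnj z)"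
proof -
  define T where "T s r = (-1) ^ (k + r) * of_nat ((k choose s) * ((n - k) choose s) * (s choose r))
    * z ^ (n - k - r) * cnj z ^ (k - r)" for s r
  have "zernike_low n k z = (\<Sum>s\<le>k. \<Sum>r\<le>k. T s r)"
    unfolding zernike_low_def T_def atMost_atLeast0[symmetric]
    by (intro sum.cong refl binomial_expansion_zernike_summand) simp
  also have "\<dots> = (\<Sum>r\<le>k. \<Sum>s\<le>k. T s r)"
    by (rule sum.swap)
  also have "\<dots> = (\<Sum>r\<le>k. zernike_coeff n k r * z ^ (n - k - r) * cnj z ^ (k - r))"
  proof (rule sum.cong)
    fix r
    assume "r \<in> {..k}"
    then have "(\<Sum>s\<le>k. (k choose s) * ((n - k) choose s) * (s choose r))
        = (k choose r) * ((n - r) choose k)"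
      using assms sum_choose_mult_choose_mult_choose[of r k "n - k"] by simp
    then have "(\<Sum>s\<le>k. of_nat ((k choose s) * ((n - k) choose s) * (s choose r)) :: complex)
        = of_nat ((k choose r) * ((n - r) choose k))"
      by (simp only: of_nat_sum[symmetric])
    moreover have "(\<Sum>s\<le>k. T s r) = (-1) ^ (k + r)
        * (\<Sum>s\<le>k. of_nat ((k choose s) * ((n - k) choose s) * (s choose r)))
        * z ^ (n - k - r) * cnj z ^ (k - r)"
      unfolding T_def by (simp only: sum_distrib_left sum_distrib_right)
    ultimately show "(\<Sum>s\<le>k. T s r) = zernike_coeff n k r * z ^ (n - k - r) * cnj z ^ (k - r)"
      by (simp only: zernike_coeff_def)
  qed simp
  also have "\<dots> = zernike_poly n k z (cnj z)"
    unfolding zernike_poly_def using assms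
    by (intro sum.mono_neutral_left) (auto simp: zernike_coeff_def binomial_eq_0)
  finally show ?thesis .
qed

lemma zernike_eq_zernike_poly:
  assumes "k \<le> n"
  shows "zernike n k = (\<lambda>z. zernike_poly n k z (cnj z))"
proof
  fix z
  show "zernike n k z = zernike_poly n k z (cnj z)"
  proof (cases "k \<le> n div 2")
    case True
    then show ?thesis
      using zernike_low_eq_zernike_poly[OF assms] by (simp add: zernike_def)
  next
    case False
    have "zernike n k z = (-1) ^ n * cnj (zernike_poly n (n - k) z (cnj z))"
      using False zernike_low_eq_zernike_poly[of "n - k" n] by (simp add: zernike_def)
    also have "\<dots> = (-1) ^ n * ((-1) ^ n * zernike_poly n k z (cnj z))"
      using zernike_poly_swap[OF assms] by (simp add: cnj_zernike_poly)
    finally show ?thesis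
      by (simp flip: power_mult_distrib)
  qed
qed

lemma
  assumes "k \<le> n"
  shows dz_zernike: "dz (zernike n k) z = zernike_poly_dz n k z (cnj z)"
    and dzbar_zernike: "dzbar (zernike n k) z = zernike_poly_dw n k z (cnj z)"
  unfolding zernike_eq_zernike_poly[OF assms]
  by (rule dz_eq_derivative dzbar_eq_derivative, rule has_derivative_zernike_poly)+

lemma zernike_low_unit_circle:
  assumes "cmod t = 1"
  shows "zernike_low n k t = (-1) ^ k * t ^ (n - k) * cnj t ^ k"
proof -
  have "1 - t * cnj t = 0"
    using complex_norm_square[of t] assms by simp
  then have "zernike_low n k t
      = (\<Sum>s=0..k. if s = 0 then (-1) ^ k * t ^ (n - k) * cnj t ^ k else 0)"
    unfolding zernike_low_def by (intro sum.cong refl) (simp add: power_minus[of "cnj t"])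
  then show ?thesis
    by simp
qed

lemma power_int_unit_circle:
  assumes "cmod t = 1" "k \<le> n"
  shows "t powi (int n - 2 * int k) = t ^ (n - k) * cnj t ^ k"
proof -
  have "t \<noteq> 0"
    using assms by auto
  have "cnj t = inverse t"
    using complex_norm_square[of t] assms by (simp add: inverse_unique)
  have "int n - 2 * int k = int (n - k) - int k"
    using assms by simp
  then have "t powi (int n - 2 * int k) = t powi int (n - k) / t powi int k"
    using \<open>t \<noteq> 0\<close> power_int_diff by metis
  also have "\<dots> = t ^ (n - k) * cnj t ^ k"
    by (simp only: power_int_of_nat \<open>cnj t = inverse t\<close> divide_inverse power_inverse)
  finally show ?thesis .
qed

lemma zernike_unit_circle:
  assumes "cmod t = 1" "k \<le> n"
  shows "zernike n k t = (-1) ^ k * t powi (int n - 2 * int k)"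
proof (cases "k \<le> n div 2")
  case True
  then show ?thesis
    using assms by (simp add: zernike_def zernike_low_unit_circle power_int_unit_circle)
next
  case False
  have "zernike n k t = (-1) ^ n * cnj ((-1) ^ (n - k) * t ^ (n - (n - k)) * cnj t ^ (n - k))"
    using False by (simp add: zernike_def zernike_low_unit_circle[OF assms(1)])
  also have "\<dots> = ((-1) ^ n * (-1) ^ (n - k)) * (t ^ (n - k) * cnj t ^ k)"
    using assms by (simp add: mult_ac)
  also have "(-1::complex) ^ n * (-1) ^ (n - k) = (-1) ^ k"
    using assms by (simp add: minus_one_power_iff)
  finally show ?thesis
    by (simp only: power_int_unit_circle[OF assms])
qed

theorem theorem1:
  fixes n :: nat
  shows "(\<forall>z. dz (zernike n n) z = 0)
       \<and> (\<forall>k\<in>{1..n}. \<forall>z. dzbar (zernike n k) z + dz (zernike n (k - 1)) z = 0)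
       \<and> (\<forall>z. dzbar (zernike n 0) z = 0)
       \<and> (\<forall>k\<in>{0..n}. \<forall>t::complex. cmod t = 1 \<longrightarrow>
             zernike n k t = (-1) ^ k * t powi (int n - 2 * int k))"
proof (intro conjI ballI allI impI)
  fix z
  show "dz (zernike n n) z = 0"
    by (simp add: dz_zernike zernike_poly_dz_diag)
  show "dzbar (zernike n 0) z = 0"
    by (simp add: dzbar_zernike zernike_poly_dw_0)
next
  fix k z
  assume "k \<in> {1..n}"
  then obtain j where "k = Suc j" "Suc j \<le> n"
    by (cases k) auto
  then show "dzbar (zernike n k) z + dz (zernike n (k - 1)) z = 0"
    by (simp add: dz_zernike dzbar_zernike zernike_poly_dw_Suc_add_dz)
next
  fix k t
  assume "k \<in> {0..n}" "cmod t = 1"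
  then show "zernike n k t = (-1) ^ k * t powi (int n - 2 * int k)"
    by (simp add: zernike_unit_circle)
qed

end
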